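(* Consider the following model. A principal P and an agent A interact over two periods $t\in\{1,2\}$. States $\omega_t\in\{0,1\}$ satisfy $\Pr[\omega_1=1]=\mu_0\in(0,1)$ and $\Pr[\omega_2=\omega\mid\omega_1=\omega]=\rho\in(1/2,1)$. In each period A chooses $e_t\in\{0,1\}$; if $e_t=1$ he observes $\omega_t$, if $e_t=0$ he observes $\omega_t$ with probability $\pi\in(0,1)$ and nothing otherwise. A then reports $r_t\in\{\varnothing,\omega_t\}$ if he observed $\omega_t$, and $r_t=\varnothing$ otherwise. P chooses $x\in\{0,1\}$ at the end of period 2. Payoffs: P gets $\mathbb{1}[x=\omega_2]-k(e_1+e_2)$, A gets $x-c(e_1+e_2)$, $c,k>0$. A mechanism $m=(\sigma,\hat x)$ consists of $\sigma_1\in\{0,1\}$, $\sigma_2:\{\varnothing,0,1\}\to\{0,1\}$, $\hat x:\{\varnothing,0,1\}^2\to\{0,1\}$; P commits to it, and A best-responds, following the recommendation and disclosing when indifferent. A mechanism is incentive compatible (IC) if (i) at every history occurring with positive probability, A's optimal testing decision equals the recommendation (obedience); (ii) at every such history and after every observed result, A optimally reports the observed result (full disclosure); and (iii) it is forcing: for every $r_1$ with $\sigma_2(r_1)=1$ after which A would report $r_2=\varnothing$, $\hat x(r_1,\varnothing)=0$. Then for any mechanism $m$ there exists an IC mechanism $m'$ that generates the same outcomes (testing decisions, information revealed and assignments) as $m$. *)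

theory Defs
  imports Main "HOL.Real"
begin

text \<open>
States, testing decisions and assignments are encoded as bool (False = 0, True = 1).
Observations and reports are of type bool option: None = nothing / the empty report,
Some w = the state w.
Parameters: mu0 = Pr[omega1 = 1], rho = persistence, pp = pi (prob. of observing without
testing), c = agent's testing cost.
\<close>

datatype mech = Mech (sig1: bool) (sig2: "bool option \<Rightarrow> bool")
                     (xhat: "bool option \<Rightarrow> bool option \<Rightarrow> bool")

definition rep2 :: "mech \<Rightarrow> bool option \<Rightarrow> bool option \<Rightarrow> bool option" where
  "rep2 m r1 o2 = (case o2 of None \<Rightarrow> None
     | Some w \<Rightarrow> (if xhat m r1 None \<and> \<not> xhat m r1 (Some w) then None else Some w))"

definition val2 :: "mech \<Rightarrow> bool option \<Rightarrow> bool option \<Rightarrow> real" where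
  "val2 m r1 o2 = of_bool (xhat m r1 (rep2 m r1 o2))"

text \<open>Agent's belief Pr[omega2 = 1] given his period-1 observation o1
  (o1 = None only arises without testing, in which case the belief on omega1 stays mu0).\<close>
definition belief2 :: "real \<Rightarrow> real \<Rightarrow> bool option \<Rightarrow> real" where
  "belief2 rho mu0 o1 =
     (let mu = (case o1 of None \<Rightarrow> mu0 | Some w \<Rightarrow> of_bool w) in rho * mu + (1 - rho) * (1 - mu))"

text \<open>Agent's expected period-2 utility (gross of period-1 cost) from testing decision e,
  given report r1 and belief q on omega2.\<close>
definition util2 :: "real \<Rightarrow> real \<Rightarrow> mech \<Rightarrow> bool option \<Rightarrow> real \<Rightarrow> bool \<Rightarrow> real" where
  "util2 pp c m r1 q e =
     (if e then q * val2 m r1 (Some True) + (1 - q) * val2 m r1 (Some False) - c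
      else pp * (q * val2 m r1 (Some True) + (1 - q) * val2 m r1 (Some False))
           + (1 - pp) * val2 m r1 None)"

definition choice2 :: "real \<Rightarrow> real \<Rightarrow> mech \<Rightarrow> bool option \<Rightarrow> real \<Rightarrow> bool" where
  "choice2 pp c m r1 q =
     (if util2 pp c m r1 q (\<not> sig2 m r1) > util2 pp c m r1 q (sig2 m r1)
      then \<not> sig2 m r1 else sig2 m r1)"

definition cont2 :: "real \<Rightarrow> real \<Rightarrow> mech \<Rightarrow> bool option \<Rightarrow> real \<Rightarrow> real" where
  "cont2 pp c m r1 q = max (util2 pp c m r1 q True) (util2 pp c m r1 q False)"

definition rep1 :: "real \<Rightarrow> real \<Rightarrow> real \<Rightarrow> real \<Rightarrow> mech \<Rightarrow> bool option \<Rightarrow> bool option" where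
  "rep1 mu0 rho pp c m o1 = (case o1 of None \<Rightarrow> None
     | Some w \<Rightarrow> (if cont2 pp c m None (belief2 rho mu0 (Some w))
                      > cont2 pp c m (Some w) (belief2 rho mu0 (Some w))
                   then None else Some w))"

definition val1 :: "real \<Rightarrow> real \<Rightarrow> real \<Rightarrow> real \<Rightarrow> mech \<Rightarrow> bool option \<Rightarrow> real" where
  "val1 mu0 rho pp c m o1 = cont2 pp c m (rep1 mu0 rho pp c m o1) (belief2 rho mu0 o1)"

definition util1 :: "real \<Rightarrow> real \<Rightarrow> real \<Rightarrow> real \<Rightarrow> mech \<Rightarrow> bool \<Rightarrow> real" where
  "util1 mu0 rho pp c m e =
     (if e then mu0 * val1 mu0 rho pp c m (Some True) + (1 - mu0) * val1 mu0 rho pp c m (Some False) - c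
      else pp * (mu0 * val1 mu0 rho pp c m (Some True) + (1 - mu0) * val1 mu0 rho pp c m (Some False))
           + (1 - pp) * val1 mu0 rho pp c m None)"

definition choice1 :: "real \<Rightarrow> real \<Rightarrow> real \<Rightarrow> real \<Rightarrow> mech \<Rightarrow> bool" where
  "choice1 mu0 rho pp c m =
     (if util1 mu0 rho pp c m (\<not> sig1 m) > util1 mu0 rho pp c m (sig1 m)
      then \<not> sig1 m else sig1 m)"

text \<open>A period-2 history with private observation o1 occurs with positive probability
  iff o1 is a possible observation under the agent's period-1 test choice.\<close>
definition hist_possible :: "real \<Rightarrow> real \<Rightarrow> real \<Rightarrow> real \<Rightarrow> mech \<Rightarrow> bool option \<Rightarrow> bool" where
  "hist_possible mu0 rho pp c m o1 = (o1 = None \<longrightarrow> \<not> choice1 mu0 rho pp c m)"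

definition IC :: "real \<Rightarrow> real \<Rightarrow> real \<Rightarrow> real \<Rightarrow> mech \<Rightarrow> bool" where
  "IC mu0 rho pp c m \<longleftrightarrow>
     \<comment> \<open>(i) obedience\<close>
     choice1 mu0 rho pp c m = sig1 m \<and>
     (\<forall>o1. hist_possible mu0 rho pp c m o1 \<longrightarrow>
        choice2 pp c m (rep1 mu0 rho pp c m o1) (belief2 rho mu0 o1)
          = sig2 m (rep1 mu0 rho pp c m o1)) \<and>
     \<comment> \<open>(ii) full disclosure\<close>
     (\<forall>w. rep1 mu0 rho pp c m (Some w) = Some w) \<and>
     (\<forall>o1 w. hist_possible mu0 rho pp c m o1 \<longrightarrow>
        rep2 m (rep1 mu0 rho pp c m o1) (Some w) = Some w) \<and>
     \<comment> \<open>(iii) forcing\<close>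
     (\<forall>r1. sig2 m r1 \<longrightarrow> \<not> xhat m r1 None)"

text \<open>Realized path given states w1 w2 and the exogenous luck l1 l2 (observing without testing):
  (omega1, omega2, e1, o1, e2, o2, x).\<close>
definition path :: "real \<Rightarrow> real \<Rightarrow> real \<Rightarrow> real \<Rightarrow> mech \<Rightarrow> bool \<Rightarrow> bool \<Rightarrow> bool \<Rightarrow> bool
    \<Rightarrow> bool \<times> bool \<times> bool \<times> bool option \<times> bool \<times> bool option \<times> bool" where
  "path mu0 rho pp c m w1 w2 l1 l2 =
    (let e1 = choice1 mu0 rho pp c m;
         o1 = (if e1 \<or> l1 then Some w1 else None);
         r1 = rep1 mu0 rho pp c m o1;
         e2 = choice2 pp c m r1 (belief2 rho mu0 o1);
         o2 = (if e2 \<or> l2 then Some w2 else None);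
         r2 = rep2 m r1 o2
     in (w1, w2, e1, o1, e2, o2, xhat m r1 r2))"

definition weight :: "real \<Rightarrow> real \<Rightarrow> real \<Rightarrow> bool \<Rightarrow> bool \<Rightarrow> bool \<Rightarrow> bool \<Rightarrow> real" where
  "weight mu0 rho pp w1 w2 l1 l2 =
     (if w1 then mu0 else 1 - mu0) * (if w2 = w1 then rho else 1 - rho)
     * (if l1 then pp else 1 - pp) * (if l2 then pp else 1 - pp)"

definition outcome_dist :: "real \<Rightarrow> real \<Rightarrow> real \<Rightarrow> real \<Rightarrow> mech
    \<Rightarrow> bool \<times> bool \<times> bool \<times> bool option \<times> bool \<times> bool option \<times> bool \<Rightarrow> real" where
  "outcome_dist mu0 rho pp c m t =
     (\<Sum>(w1, w2, l1, l2) \<in> (UNIV :: (bool \<times> bool \<times> bool \<times> bool) set).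
        (if path mu0 rho pp c m w1 w2 l1 l2 = t then weight mu0 rho pp w1 w2 l1 l2 else 0))"

end

theory Submission
  imports Defs
begin

text \<open>The new mechanism asks the agent to report his observations
truthfully, recommends the tests he would have chosen under \<open>m\<close>, and assigns what
\<open>m\<close> would have assigned on the reports he would have sent there, except that it assigns
0 after an empty period-2 report following a test recommendation.
Every continuation then pays the agent at most what the corresponding continuation of
\<open>m\<close> paid, and exactly as much along the recommended play. Since his play under
\<open>m\<close> was already optimal, no deviation from the recommendations or from truthful
reporting becomes profitable, and the realized play coincides with that under \<open>m\<close>
for every draw of states and luck.\<close>

lemma convex_comb_mono:
  fixes q a b a' b' :: real
  assumes "0 \<le> q" "q \<le> 1" "a \<le> a'" "b \<le> b'"
  shows "q * a + (1 - q) * b \<le> q * a' + (1 - q) * b'"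
  using assms by (intro add_mono mult_left_mono) auto

lemma belief2_bounds:
  assumes "0 \<le> mu0" "mu0 \<le> 1" "0 \<le> rho" "rho \<le> 1"
  shows "0 \<le> belief2 rho mu0 o1" "belief2 rho mu0 o1 \<le> 1"
proof -
  obtain mu where mu: "belief2 rho mu0 o1 = rho * mu + (1 - rho) * (1 - mu)" "0 \<le> mu" "mu \<le> 1"
    using assms by (cases o1) (auto simp: belief2_def Let_def)
  then show "0 \<le> belief2 rho mu0 o1" using assms by simp
  show "belief2 rho mu0 o1 \<le> 1"
    using mu assms convex_comb_mono[of rho mu 1 "1 - mu" 1] by simp
qed

lemma xhat_rep2_if_xhat_None: "xhat m r1 None \<Longrightarrow> xhat m r1 (rep2 m r1 o2)"
  by (auto simp: rep2_def split: option.split)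

lemma rep2_Some: "(xhat m r1 None \<longrightarrow> xhat m r1 (Some w)) \<Longrightarrow> rep2 m r1 (Some w) = Some w"
  by (simp add: rep2_def)

lemma choice2_optimal:
  "util2 pp c m r1 q (\<not> choice2 pp c m r1 q) \<le> util2 pp c m r1 q (choice2 pp c m r1 q)"
  by (auto simp: choice2_def)

lemma choice2_eq_sig2:
  "util2 pp c m r1 q (\<not> sig2 m r1) \<le> util2 pp c m r1 q (sig2 m r1) \<Longrightarrow> choice2 pp c m r1 q = sig2 m r1"
  by (simp add: choice2_def)

lemma cont2_eq_util2:
  "util2 pp c m r1 q (\<not> e) \<le> util2 pp c m r1 q e \<Longrightarrow> cont2 pp c m r1 q = util2 pp c m r1 q e"
  by (cases e) (auto simp: cont2_def max_def)

lemma rep1_None: "rep1 mu0 rho pp c m None = None"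
  by (simp add: rep1_def)

lemma rep1_optimal:
  "cont2 pp c m None (belief2 rho mu0 (Some w))
     \<le> cont2 pp c m (rep1 mu0 rho pp c m (Some w)) (belief2 rho mu0 (Some w))"
  by (auto simp: rep1_def)

lemma rep1_Some:
  "cont2 pp c m None (belief2 rho mu0 (Some w)) \<le> cont2 pp c m (Some w) (belief2 rho mu0 (Some w))
     \<Longrightarrow> rep1 mu0 rho pp c m (Some w) = Some w"
  by (simp add: rep1_def)

lemma choice1_optimal:
  "util1 mu0 rho pp c m (\<not> choice1 mu0 rho pp c m) \<le> util1 mu0 rho pp c m (choice1 mu0 rho pp c m)"
  by (auto simp: choice1_def)

lemma choice1_eq_sig1:
  "util1 mu0 rho pp c m (\<not> sig1 m) \<le> util1 mu0 rho pp c m (sig1 m) \<Longrightarrow> choice1 mu0 rho pp c m = sig1 m"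
  by (simp add: choice1_def)

lemma util2_mono:
  assumes "0 \<le> q" "q \<le> 1" "0 \<le> pp" "pp \<le> 1"
    and "\<And>o2. val2 m r1 o2 \<le> val2 m' r1' o2"
  shows "util2 pp c m r1 q e \<le> util2 pp c m' r1' q e"
proof -
  have tested: "q * val2 m r1 (Some True) + (1 - q) * val2 m r1 (Some False)
      \<le> q * val2 m' r1' (Some True) + (1 - q) * val2 m' r1' (Some False)"
    using assms by (intro convex_comb_mono) auto
  have "pp * (q * val2 m r1 (Some True) + (1 - q) * val2 m r1 (Some False)) + (1 - pp) * val2 m r1 None
      \<le> pp * (q * val2 m' r1' (Some True) + (1 - q) * val2 m' r1' (Some False)) + (1 - pp) * val2 m' r1' None"
    using assms tested by (intro convex_comb_mono) auto
  with tested show ?thesis by (simp add: util2_def)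
qed

lemma util2_cong:
  assumes "\<And>w. val2 m r1 (Some w) = val2 m' r1' (Some w)"
    and "\<not> e \<Longrightarrow> val2 m r1 None = val2 m' r1' None"
  shows "util2 pp c m r1 q e = util2 pp c m' r1' q e"
  using assms by (simp add: util2_def)

text \<open>\<open>R\<close> translates the truthfully reported observation \<open>o1\<close> into the period-1
report the agent would have sent to \<open>m\<close>.\<close>

definition direct_mech ::
    "bool \<Rightarrow> (bool option \<Rightarrow> bool option) \<Rightarrow> (bool option \<Rightarrow> bool) \<Rightarrow> mech \<Rightarrow> mech" where
  "direct_mech e1 R E m =
     Mech e1 E (\<lambda>o1 o2. xhat m (R o1) (rep2 m (R o1) o2) \<and> (o2 = None \<longrightarrow> \<not> E o1))"

lemma sig1_direct_mech [simp]: "sig1 (direct_mech e1 R E m) = e1"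
  and sig2_direct_mech [simp]: "sig2 (direct_mech e1 R E m) = E"
  by (simp_all add: direct_mech_def)

lemma xhat_direct_mech:
  "xhat (direct_mech e1 R E m) o1 o2 \<longleftrightarrow>
     xhat m (R o1) (rep2 m (R o1) o2) \<and> (o2 = None \<longrightarrow> \<not> E o1)"
  by (simp add: direct_mech_def)

lemma rep2_direct_mech: "rep2 (direct_mech e1 R E m) o1 (Some w) = Some w"
  by (intro rep2_Some) (auto simp: xhat_direct_mech rep2_def intro: xhat_rep2_if_xhat_None)

lemma xhat_rep2_direct_mech:
  "xhat (direct_mech e1 R E m) o1 (rep2 (direct_mech e1 R E m) o1 o2) \<longleftrightarrow>
     xhat m (R o1) (rep2 m (R o1) o2) \<and> (o2 = None \<longrightarrow> \<not> E o1)"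
  by (cases o2) (simp_all add: rep2_direct_mech xhat_direct_mech, simp add: rep2_def)

lemma val2_direct_mech_le: "val2 (direct_mech e1 R E m) o1 o2 \<le> val2 m (R o1) o2"
  by (simp add: val2_def xhat_rep2_direct_mech)

lemma val2_direct_mech:
  "(o2 = None \<longrightarrow> \<not> E o1) \<Longrightarrow> val2 (direct_mech e1 R E m) o1 o2 = val2 m (R o1) o2"
  by (simp add: val2_def xhat_rep2_direct_mech)

lemma util2_direct_mech_le:
  "0 \<le> q \<Longrightarrow> q \<le> 1 \<Longrightarrow> 0 \<le> pp \<Longrightarrow> pp \<le> 1 \<Longrightarrow>
     util2 pp c (direct_mech e1 R E m) o1 q e \<le> util2 pp c m (R o1) q e"
  by (intro util2_mono val2_direct_mech_le)

lemma util2_direct_mech_recommended: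
  "util2 pp c (direct_mech e1 R E m) o1 q (E o1) = util2 pp c m (R o1) q (E o1)"
  by (intro util2_cong val2_direct_mech) auto

lemma recommendation_optimal_direct_mech:
  assumes "E o1 = choice2 pp c m (R o1) q" "0 \<le> q" "q \<le> 1" "0 \<le> pp" "pp \<le> 1"
  shows "util2 pp c (direct_mech e1 R E m) o1 q (\<not> E o1) \<le> util2 pp c (direct_mech e1 R E m) o1 q (E o1)"
proof -
  have "util2 pp c (direct_mech e1 R E m) o1 q (\<not> E o1) \<le> util2 pp c m (R o1) q (\<not> E o1)"
    using assms(2-5) by (rule util2_direct_mech_le)
  also have "\<dots> \<le> util2 pp c m (R o1) q (E o1)"
    using choice2_optimal[of pp c m "R o1" q] by (simp add: assms(1))
  also have "\<dots> = util2 pp c (direct_mech e1 R E m) o1 q (E o1)"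
    by (rule util2_direct_mech_recommended[symmetric])
  finally show ?thesis .
qed

lemma choice2_direct_mech:
  assumes "E o1 = choice2 pp c m (R o1) q" "0 \<le> q" "q \<le> 1" "0 \<le> pp" "pp \<le> 1"
  shows "choice2 pp c (direct_mech e1 R E m) o1 q = E o1"
  using choice2_eq_sig2[of pp c "direct_mech e1 R E m" o1 q]
    recommendation_optimal_direct_mech[of E o1 pp c m R q e1, OF assms]
  by simp

lemma cont2_direct_mech:
  assumes "E o1 = choice2 pp c m (R o1) q" "0 \<le> q" "q \<le> 1" "0 \<le> pp" "pp \<le> 1"
  shows "cont2 pp c (direct_mech e1 R E m) o1 q = cont2 pp c m (R o1) q"
proof -
  have "cont2 pp c (direct_mech e1 R E m) o1 q = util2 pp c (direct_mech e1 R E m) o1 q (E o1)"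
    using assms by (intro cont2_eq_util2 recommendation_optimal_direct_mech)
  also have "\<dots> = util2 pp c m (R o1) q (E o1)"
    by (rule util2_direct_mech_recommended)
  also have "\<dots> = cont2 pp c m (R o1) q"
    using cont2_eq_util2[OF choice2_optimal] by (simp add: assms(1))
  finally show ?thesis .
qed

lemma cont2_direct_mech_le:
  "0 \<le> q \<Longrightarrow> q \<le> 1 \<Longrightarrow> 0 \<le> pp \<Longrightarrow> pp \<le> 1 \<Longrightarrow>
     cont2 pp c (direct_mech e1 R E m) o1 q \<le> cont2 pp c m (R o1) q"
  unfolding cont2_def by (intro max.mono util2_direct_mech_le)

definition revelation_mech :: "real \<Rightarrow> real \<Rightarrow> real \<Rightarrow> real \<Rightarrow> mech \<Rightarrow> mech" where
  "revelation_mech mu0 rho pp c m =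
     direct_mech (choice1 mu0 rho pp c m) (rep1 mu0 rho pp c m)
       (\<lambda>o1. choice2 pp c m (rep1 mu0 rho pp c m o1) (belief2 rho mu0 o1)) m"

context
  fixes mu0 rho pp c :: real
  assumes probs: "0 \<le> mu0" "mu0 \<le> 1" "0 \<le> rho" "rho \<le> 1" "0 \<le> pp" "pp \<le> 1"
begin

lemma choice2_revelation_mech:
  "choice2 pp c (revelation_mech mu0 rho pp c m) o1 (belief2 rho mu0 o1)
     = choice2 pp c m (rep1 mu0 rho pp c m o1) (belief2 rho mu0 o1)"
  unfolding revelation_mech_def using probs belief2_bounds by (intro choice2_direct_mech) auto

lemma cont2_revelation_mech:
  "cont2 pp c (revelation_mech mu0 rho pp c m) o1 (belief2 rho mu0 o1)
     = cont2 pp c m (rep1 mu0 rho pp c m o1) (belief2 rho mu0 o1)"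
  unfolding revelation_mech_def using probs belief2_bounds by (intro cont2_direct_mech) auto

lemma rep1_revelation_mech: "rep1 mu0 rho pp c (revelation_mech mu0 rho pp c m) o1 = o1"
proof (cases o1)
  case (Some w)
  let ?m' = "revelation_mech mu0 rho pp c m" and ?q = "belief2 rho mu0 (Some w)"
  have "cont2 pp c ?m' None ?q \<le> cont2 pp c m (rep1 mu0 rho pp c m None) ?q"
    unfolding revelation_mech_def using probs belief2_bounds by (intro cont2_direct_mech_le) auto
  also have "\<dots> \<le> cont2 pp c m (rep1 mu0 rho pp c m (Some w)) ?q"
    using rep1_optimal by (simp add: rep1_None)
  also have "\<dots> = cont2 pp c ?m' (Some w) ?q"
    by (rule cont2_revelation_mech[symmetric])
  finally show ?thesis using Some by (simp add: rep1_Some)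
qed (simp add: rep1_None)

lemma util1_revelation_mech:
  "util1 mu0 rho pp c (revelation_mech mu0 rho pp c m) = util1 mu0 rho pp c m"
proof -
  have "val1 mu0 rho pp c (revelation_mech mu0 rho pp c m) = val1 mu0 rho pp c m"
    by (simp add: fun_eq_iff val1_def rep1_revelation_mech cont2_revelation_mech)
  then show ?thesis by (simp add: fun_eq_iff util1_def)
qed

lemma choice1_revelation_mech:
  "choice1 mu0 rho pp c (revelation_mech mu0 rho pp c m) = choice1 mu0 rho pp c m"
proof -
  have "sig1 (revelation_mech mu0 rho pp c m) = choice1 mu0 rho pp c m"
    by (simp add: revelation_mech_def)
  moreover note choice1_optimal[of mu0 rho pp c m]
  ultimately show ?thesis
    by (intro choice1_eq_sig1[THEN trans]) (simp_all add: util1_revelation_mech)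
qed

lemma IC_revelation_mech: "IC mu0 rho pp c (revelation_mech mu0 rho pp c m)"
  unfolding IC_def rep1_revelation_mech choice2_revelation_mech choice1_revelation_mech
  by (simp add: revelation_mech_def rep2_direct_mech xhat_direct_mech)

lemma path_revelation_mech:
  "path mu0 rho pp c (revelation_mech mu0 rho pp c m) w1 w2 l1 l2 = path mu0 rho pp c m w1 w2 l1 l2"
proof -
  let ?E = "\<lambda>o1. choice2 pp c m (rep1 mu0 rho pp c m o1) (belief2 rho mu0 o1)"
  have "xhat (revelation_mech mu0 rho pp c m) o1
          (rep2 (revelation_mech mu0 rho pp c m) o1 (if ?E o1 \<or> l2 then Some w2 else None))
        = xhat m (rep1 mu0 rho pp c m o1)
            (rep2 m (rep1 mu0 rho pp c m o1) (if ?E o1 \<or> l2 then Some w2 else None))" for o1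
    unfolding revelation_mech_def xhat_rep2_direct_mech by simp
  then show ?thesis
    unfolding path_def Let_def choice1_revelation_mech rep1_revelation_mech choice2_revelation_mech
    by simp
qed

lemma outcome_dist_revelation_mech:
  "outcome_dist mu0 rho pp c (revelation_mech mu0 rho pp c m) = outcome_dist mu0 rho pp c m"
  unfolding outcome_dist_def path_revelation_mech ..

end

theorem proposition3:
  fixes mu0 rho pp c k :: real and m :: mech
  assumes "0 < mu0" "mu0 < 1" "1/2 < rho" "rho < 1" "0 < pp" "pp < 1" "0 < c" "0 < k"
  shows "\<exists>m'. IC mu0 rho pp c m' \<and> outcome_dist mu0 rho pp c m' = outcome_dist mu0 rho pp c m"
proof (intro exI conjI)
  have probs: "0 \<le> mu0" "mu0 \<le> 1" "0 \<le> rho" "rho \<le> 1" "0 \<le> pp" "pp \<le> 1"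
    using assms by linarith+
  then show "IC mu0 rho pp c (revelation_mech mu0 rho pp c m)"
    by (rule IC_revelation_mech)
  from probs show "outcome_dist mu0 rho pp c (revelation_mech mu0 rho pp c m) = outcome_dist mu0 rho pp c m"
    by (rule outcome_dist_revelation_mech)
qed

end
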